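(* Let $a,b\in\{1,2,3\}$ with $a\neq b$, and let $P\in R$ not depend on $x_{a4}$ and satisfy $DP=D_1P=D_2P=D_3P=D_4P=0$. Then there exists $Q\in R$ not depending on $x_{a4}$ with $\partial_{b4}Q=P$ and $DQ=D_1Q=D_2Q=D_3Q=D_4Q=0$.
   Context: $R=\mathbb C[x_1,x_2,x_3,x_4,x_{12},x_{13},x_{14},x_{23},x_{24},x_{34}]$ (i.e. $\mathrm{Sym}(\mathbb C^4)\otimes\mathrm{Sym}(\Lambda^2\mathbb C^4)$), $\partial_i=\partial/\partial x_i$, $\partial_{ij}=\partial/\partial x_{ij}$, $D=\partial_{12}\partial_{34}-\partial_{13}\partial_{24}+\partial_{14}\partial_{23}$, $D_1=\partial_{23}\partial_4-\partial_{24}\partial_3+\partial_{34}\partial_2$, $D_2=\partial_{13}\partial_4-\partial_{14}\partial_3+\partial_{34}\partial_1$, $D_3=\partial_{12}\partial_4-\partial_{14}\partial_2+\partial_{24}\partial_1$, $D_4=\partial_{12}\partial_3-\partial_{13}\partial_2+\partial_{23}\partial_1$. *)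

theory Defs
  imports Complex_Main "HOL-Library.Poly_Mapping"
begin

text \<open>The ten variables of R = Sym(C^4) (x) Sym(Lambda^2 C^4).\<close>
datatype var = X1 | X2 | X3 | X4 | X12 | X13 | X14 | X23 | X24 | X34

type_synonym poly10 = "(var \<Rightarrow>\<^sub>0 nat) \<Rightarrow>\<^sub>0 complex"

lift_definition pd :: "var \<Rightarrow> poly10 \<Rightarrow> poly10" is
  "\<lambda>v p m. of_nat (Poly_Mapping.lookup m v + 1) * p (m + Poly_Mapping.single v 1)"
proof -
  fix v and p :: "(var \<Rightarrow>\<^sub>0 nat) \<Rightarrow> complex"
  assume fin: "finite {m. p m \<noteq> 0}"
  have "{m. of_nat (Poly_Mapping.lookup m v + 1) * p (m + Poly_Mapping.single v 1) \<noteq> (0::complex)}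
        \<subseteq> (\<lambda>m. m - Poly_Mapping.single v 1) ` {m. p m \<noteq> 0}"
  proof
    fix m assume "m \<in> {m. of_nat (Poly_Mapping.lookup m v + 1) * p (m + Poly_Mapping.single v 1) \<noteq> (0::complex)}"
    then have "p (m + Poly_Mapping.single v 1) \<noteq> 0" by simp
    moreover have "m = (m + Poly_Mapping.single v 1) - Poly_Mapping.single v 1"
      by simp
    ultimately show "m \<in> (\<lambda>m. m - Poly_Mapping.single v 1) ` {m. p m \<noteq> 0}" by blast
  qed
  then show "finite {m. of_nat (Poly_Mapping.lookup m v + 1) * p (m + Poly_Mapping.single v 1) \<noteq> (0::complex)}"
    using fin finite_subset by blast
qed

definition indep_of :: "var \<Rightarrow> poly10 \<Rightarrow> bool" where
  "indep_of v P \<longleftrightarrow> (\<forall>m \<in> Poly_Mapping.keys P. Poly_Mapping.lookup m v = 0)"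

definition opD :: "poly10 \<Rightarrow> poly10" where
  "opD P = pd X12 (pd X34 P) - pd X13 (pd X24 P) + pd X14 (pd X23 P)"
definition opD1 :: "poly10 \<Rightarrow> poly10" where
  "opD1 P = pd X23 (pd X4 P) - pd X24 (pd X3 P) + pd X34 (pd X2 P)"
definition opD2 :: "poly10 \<Rightarrow> poly10" where
  "opD2 P = pd X13 (pd X4 P) - pd X14 (pd X3 P) + pd X34 (pd X1 P)"
definition opD3 :: "poly10 \<Rightarrow> poly10" where
  "opD3 P = pd X12 (pd X4 P) - pd X14 (pd X2 P) + pd X24 (pd X1 P)"
definition opD4 :: "poly10 \<Rightarrow> poly10" where
  "opD4 P = pd X12 (pd X3 P) - pd X13 (pd X2 P) + pd X23 (pd X1 P)"

fun x_4 :: "nat \<Rightarrow> var" where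
  "x_4 (Suc 0) = X14"
| "x_4 (Suc (Suc 0)) = X24"
| "x_4 _ = X34"

end

theory Submission
  imports Defs
begin

text \<open>
  Passing to Taylor coefficients \<open>f(m) = (\<partial>\<^sup>m P)(0)\<close> turns a polynomial into a finitely supported
  function on monomials, \<open>\<partial>\<^sub>v\<close> into the shift \<open>m \<mapsto> m + x\<^sub>v\<close>, and the hypotheses into linear
  recurrences. After relabelling the variables (\<open>z = x\<^sub>a\<^sub>4\<close>, \<open>y = x\<^sub>b\<^sub>4\<close>) and changing the sign of
  some of them, these say that \<open>f\<close> is a linear form on \<open>A = \<complex>[x]/I\<close>, where \<open>I\<close> is generated by \<open>z\<close> and
  five quadrics \<open>x\<^sup>l - x\<^sup>s + x\<^sup>t\<close>; we need a linear form \<open>g\<close> on \<open>A\<close> with \<open>g(y u) = f(u)\<close>.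

  The substitution \<open>y \<mapsto> y\<^sup>2, z \<mapsto> 0, a1 \<mapsto> y a1, a2 \<mapsto> a1 d1, a3 \<mapsto> -a1 d2, b\<^sub>i \<mapsto> y b\<^sub>i,
  c \<mapsto> b2 d1 + b1 d2, d\<^sub>i \<mapsto> y d\<^sub>i\<close> kills \<open>I\<close>, and a leading-term argument shows that it maps the
  standard monomials (divisible neither by \<open>z\<close> nor by a leading monomial \<open>x\<^sup>l\<close>) to linearly
  independent polynomials. Every monomial reduces modulo \<open>I\<close> to standard ones, so these form a basis
  of \<open>A\<close>, and the basis is stable under multiplication by \<open>y\<close>. Hence \<open>g\<close> can be prescribed freely on
  it: \<open>g(w) = f(w/y)\<close> if \<open>y\<close> divides \<open>w\<close>, and \<open>g(w) = 0\<close> otherwise.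
\<close>

instance var :: finite
proof
  have "(UNIV :: var set) = {X1, X2, X3, X4, X12, X13, X14, X23, X24, X34}"
    by (auto intro: var.exhaust)
  then show "finite (UNIV :: var set)" by (metis finite.emptyI finite_insert)
qed

alias lookup = Poly_Mapping.lookup
alias keys = Poly_Mapping.keys
alias single = Poly_Mapping.single

type_synonym mon = "var \<Rightarrow>\<^sub>0 nat"

definition mvar :: "var \<Rightarrow> mon" where
  "mvar v = single v 1"

lemma lookup_mvar [simp]: "lookup (mvar v) w = (if v = w then 1 else 0)"
  by (simp add: mvar_def lookup_single when_def)

lemma ex_add_mvar_iff:
  assumes "u \<noteq> v"
  shows "(\<exists>k. m = k + mvar u + mvar v) \<longleftrightarrow> 0 < lookup m u \<and> 0 < lookup m v"
proof
  assume "0 < lookup m u \<and> 0 < lookup m v"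
  then have "m = (m - mvar u - mvar v) + mvar u + mvar v"
    using assms by (intro poly_mapping_eqI) (auto simp: lookup_add lookup_minus)
  then show "\<exists>k. m = k + mvar u + mvar v" by blast
next
  assume "\<exists>k. m = k + mvar u + mvar v"
  then obtain k where m: "m = k + mvar u + mvar v" ..
  show "0 < lookup m u \<and> 0 < lookup m v"
    unfolding m using assms by (simp add: lookup_add)
qed

lemma diff_add_mvar: "0 < lookup m v \<Longrightarrow> m - mvar v + mvar v = m"
  by (rule poly_mapping_eqI) (auto simp: lookup_add lookup_minus)

definition deg :: "mon \<Rightarrow> nat" where
  "deg m = (\<Sum>v\<in>UNIV. lookup m v)"

lemma deg_add: "deg (m + n) = deg m + deg n"
  by (simp add: deg_def lookup_add sum.distrib)

lemma deg_mvar [simp]: "deg (mvar v) = 1"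
  by (simp add: deg_def)

lemma finite_deg_le: "finite {m. deg m \<le> D}"
proof -
  have "lookup m v \<le> D" if "deg m \<le> D" for m v
    using member_le_sum[of v UNIV "lookup m"] that unfolding deg_def by simp
  then have "lookup ` {m. deg m \<le> D} \<subseteq> {f. \<forall>v. (v \<in> UNIV \<longrightarrow> f v \<in> {..D}) \<and> (v \<notin> UNIV \<longrightarrow> f v = 0)}"
    by auto
  then have "finite (lookup ` {m. deg m \<le> D})"
    by (rule finite_subset) (rule finite_set_of_finite_funs; simp)
  then show ?thesis
    by (rule finite_imageD) (simp add: inj_on_def)
qed


subsection \<open>Taylor coefficients\<close>

definition mfact :: "mon \<Rightarrow> complex" where
  "mfact m = (\<Prod>v\<in>UNIV. fact (lookup m v))"

lemma mfact_nonzero [simp]: "mfact m \<noteq> 0"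
  by (simp add: mfact_def)

lemma mfact_add_mvar: "mfact (m + mvar v) = of_nat (lookup m v + 1) * mfact m"
proof -
  have "mfact (m + mvar v) = fact (lookup m v + 1) * (\<Prod>w\<in>UNIV - {v}. fact (lookup m w))"
    unfolding mfact_def by (subst prod.remove[of _ v]) (auto simp: lookup_add intro!: prod.cong)
  also have "\<dots> = of_nat (lookup m v + 1) * mfact m"
    unfolding mfact_def by (subst (2) prod.remove[of _ v]) (auto simp: fact_Suc)
  finally show ?thesis .
qed

text \<open>\<open>taylor P m\<close> is the value at the origin of the derivative \<open>\<partial>\<^sup>m P\<close>.\<close>

definition taylor :: "poly10 \<Rightarrow> mon \<Rightarrow> complex" where
  "taylor P m = mfact m * lookup P m"

lemma lookup_pd: "lookup (pd v P) m = of_nat (lookup m v + 1) * lookup P (m + mvar v)"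
  by (simp add: pd.rep_eq mvar_def)

lemma taylor_pd: "taylor (pd v P) m = taylor P (m + mvar v)"
  by (simp add: taylor_def lookup_pd mfact_add_mvar)

lemma taylor_zero [simp]: "taylor 0 m = 0"
  by (simp add: taylor_def)

lemma taylor_add: "taylor (P + Q) m = taylor P m + taylor Q m"
  by (simp add: taylor_def lookup_add distrib_left)

lemma taylor_diff: "taylor (P - Q) m = taylor P m - taylor Q m"
  by (simp add: taylor_def lookup_minus right_diff_distrib)

lemma poly_eq_iff_taylor: "P = Q \<longleftrightarrow> (\<forall>m. taylor P m = taylor Q m)"
  by (auto simp: taylor_def intro: poly_mapping_eqI)

lemma taylor_surj:
  assumes "finite {m. g m \<noteq> 0}"
  shows "\<exists>Q. \<forall>m. taylor Q m = g m"
proof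
  have "finite {m. g m / mfact m \<noteq> 0}"
    using assms by simp
  then show "\<forall>m. taylor (Abs_poly_mapping (\<lambda>m. g m / mfact m)) m = g m"
    by (simp add: taylor_def)
qed

lemma indep_of_iff_taylor: "indep_of v P \<longleftrightarrow> (\<forall>m. 0 < lookup m v \<longrightarrow> taylor P m = 0)"
  by (auto simp: indep_of_def taylor_def in_keys_iff Ball_def)

definition harmonic :: "poly10 \<Rightarrow> bool" where
  "harmonic P \<longleftrightarrow> opD P = 0 \<and> opD1 P = 0 \<and> opD2 P = 0 \<and> opD3 P = 0 \<and> opD4 P = 0"

lemma harmonic_iff_taylor:
  "harmonic P \<longleftrightarrow>
    (\<forall>m. taylor P (m + mvar X12 + mvar X34) - taylor P (m + mvar X13 + mvar X24)
          + taylor P (m + mvar X14 + mvar X23) = 0) \<and>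
    (\<forall>m. taylor P (m + mvar X23 + mvar X4) - taylor P (m + mvar X24 + mvar X3)
          + taylor P (m + mvar X34 + mvar X2) = 0) \<and>
    (\<forall>m. taylor P (m + mvar X13 + mvar X4) - taylor P (m + mvar X14 + mvar X3)
          + taylor P (m + mvar X34 + mvar X1) = 0) \<and>
    (\<forall>m. taylor P (m + mvar X12 + mvar X4) - taylor P (m + mvar X14 + mvar X2)
          + taylor P (m + mvar X24 + mvar X1) = 0) \<and>
    (\<forall>m. taylor P (m + mvar X12 + mvar X3) - taylor P (m + mvar X13 + mvar X2)
          + taylor P (m + mvar X23 + mvar X1) = 0)"
  by (simp add: harmonic_def opD_def opD1_def opD2_def opD3_def opD4_def poly_eq_iff_taylor
      taylor_add taylor_diff taylor_pd)

text \<open>\<open>flip_sign N m\<close> is the factor by which the substitution \<open>x\<^sub>v \<mapsto> -x\<^sub>v\<close> for \<open>v \<in> N\<close>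
  changes the Taylor coefficient at \<open>m\<close>.\<close>

definition flip_sign :: "var set \<Rightarrow> mon \<Rightarrow> complex" where
  "flip_sign N m = (-1) ^ (\<Sum>v\<in>N. lookup m v)"

lemma flip_sign_add: "flip_sign N (m + n) = flip_sign N m * flip_sign N n"
  by (simp add: flip_sign_def lookup_add sum.distrib power_add)

lemma flip_sign_mvar [simp]: "flip_sign N (mvar v) = (if v \<in> N then -1 else 1)"
  by (simp add: flip_sign_def sum.delta)

lemma flip_sign_square: "flip_sign N m * flip_sign N m = 1"
  by (simp add: flip_sign_def power_add[symmetric])

lemma flip_sign_nonzero [simp]: "flip_sign N m \<noteq> 0"
  by (simp add: flip_sign_def)


definition lin :: "(mon \<Rightarrow> complex) \<Rightarrow> poly10 \<Rightarrow> complex" where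
  "lin F P = (\<Sum>m\<in>keys P. lookup P m * F m)"

lemma lin_superset:
  "finite S \<Longrightarrow> keys P \<subseteq> S \<Longrightarrow> lin F P = (\<Sum>m\<in>S. lookup P m * F m)"
  unfolding lin_def by (rule sum.mono_neutral_left) (auto simp: in_keys_iff)

lemma lin_diff: "lin F (P - Q) = lin F P - lin F Q"
proof -
  let ?S = "keys P \<union> keys Q"
  have "lin F (P - Q) = (\<Sum>m\<in>?S. lookup (P - Q) m * F m)"
    by (rule lin_superset) (auto simp: keys_diff)
  also have "\<dots> = lin F P - lin F Q"
    by (simp add: lin_superset[where S = ?S] lookup_minus left_diff_distrib sum_subtractf)
  finally show ?thesis .
qed

lemma lin_zero [simp]: "lin F 0 = 0"
  by (simp add: lin_def)

lemma lin_single [simp]: "lin F (single m 1) = F m"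
  by (simp add: lin_def)

subsection \<open>Five quadrics in ten variables\<close>

locale five_quadrics =
  fixes y z a1 a2 a3 b1 b2 c d1 d2 :: var
  assumes distinct_vars: "distinct [y, z, a1, a2, a3, b1, b2, c, d1, d2]"
begin

lemmas vars_neq [simp] =
  distinct_vars[simplified] distinct_vars[THEN distinct_rev[THEN iffD2], simplified]

lemma UNIV_eq_vars: "(UNIV :: var set) = {y, z, a1, a2, a3, b1, b2, c, d1, d2}"
proof -
  have UNIV_var: "(UNIV :: var set) = {X1, X2, X3, X4, X12, X13, X14, X23, X24, X34}"
    by (auto intro: var.exhaust)
  have "card (UNIV :: var set) = 10"
    unfolding UNIV_var by simp
  moreover have "card {y, z, a1, a2, a3, b1, b2, c, d1, d2} = 10"
    using distinct_vars by simp
  ultimately show ?thesis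
    by (metis card_subset_eq finite subset_UNIV)
qed

text \<open>A triple \<open>(l, s, t)\<close> stands for the quadric \<open>x\<^sup>l - x\<^sup>s + x\<^sup>t\<close>; its leading monomial
  \<open>x\<^sup>l\<close> has larger weight \<open>wt\<close> than the other two.\<close>

definition quadrics :: "(mon \<times> mon \<times> mon) list" where
  "quadrics =
    [(mvar a1 + mvar d1, mvar a2 + mvar y, mvar z + mvar b1),
     (mvar b1 + mvar d2, mvar y + mvar c, mvar d1 + mvar b2),
     (mvar a2 + mvar d2, mvar z + mvar c, mvar d1 + mvar a3),
     (mvar a1 + mvar d2, mvar z + mvar b2, mvar y + mvar a3),
     (mvar b1 + mvar a3, mvar a2 + mvar b2, mvar a1 + mvar c)]"

text \<open>The Taylor coefficient functions of the polynomials independent of \<open>z\<close> that are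
  annihilated by the five operators \<open>\<partial>\<^sup>l - \<partial>\<^sup>s + \<partial>\<^sup>t\<close>.\<close>

definition solution :: "(mon \<Rightarrow> complex) \<Rightarrow> bool" where
  "solution f \<longleftrightarrow> (\<forall>m. 0 < lookup m z \<longrightarrow> f m = 0) \<and>
     (\<forall>(l, s, t) \<in> set quadrics. \<forall>m. f (m + l) - f (m + s) + f (m + t) = 0)"

definition standard :: "mon \<Rightarrow> bool" where
  "standard m \<longleftrightarrow> lookup m z = 0 \<and> (\<forall>(l, s, t) \<in> set quadrics. \<forall>k. m \<noteq> k + l)"

lemma standard_iff:
  "standard m \<longleftrightarrow> lookup m z = 0 \<and>
     \<not> (0 < lookup m a1 \<and> 0 < lookup m d1) \<and> \<not> (0 < lookup m b1 \<and> 0 < lookup m d2) \<and>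
     \<not> (0 < lookup m a2 \<and> 0 < lookup m d2) \<and> \<not> (0 < lookup m a1 \<and> 0 < lookup m d2) \<and>
     \<not> (0 < lookup m b1 \<and> 0 < lookup m a3)"
  by (simp add: standard_def quadrics_def add.assoc[symmetric] ex_add_mvar_iff[symmetric])

lemma standard_add_mvar_y: "standard m \<Longrightarrow> standard (m + mvar y)"
  by (simp add: standard_iff lookup_add)

definition wt :: "mon \<Rightarrow> nat" where
  "wt m = 4 * lookup m a1 + 3 * lookup m a2 + 2 * lookup m a3 + 3 * lookup m b1"

lemma wt_add: "wt (m + n) = wt m + wt n"
  by (simp add: wt_def lookup_add)

lemma quadrics_wt: "(l, s, t) \<in> set quadrics \<Longrightarrow> wt s < wt l \<and> wt t < wt l"
  by (auto simp: quadrics_def wt_def lookup_add)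

lemma quadrics_deg: "(l, s, t) \<in> set quadrics \<Longrightarrow> deg s = deg l \<and> deg t = deg l"
  by (auto simp: quadrics_def deg_add)

lemma solution_shift:
  assumes "solution f" and "lookup n z = 0"
  shows "solution (\<lambda>m. f (m + n))"
proof -
  have "f (m + l + n) - f (m + s + n) + f (m + t + n) = 0" if "(l, s, t) \<in> set quadrics" for l s t m
  proof -
    have "f (m + n + l) - f (m + n + s) + f (m + n + t) = 0"
      using assms(1) that unfolding solution_def by blast
    then show ?thesis
      by (simp only: ac_simps)
  qed
  then show ?thesis
    using assms unfolding solution_def by (auto simp: lookup_add)
qed

text \<open>A solution is determined by its values on standard monomials: a nonstandard monomial
  either contains \<open>z\<close> or is rewritten by a quadric into monomials of smaller weight.\<close>

lemma solution_eqI: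
  assumes f: "solution f" and g: "solution g" and std: "\<And>w. standard w \<Longrightarrow> f w = g w"
  shows "f = g"
proof
  fix m
  show "f m = g m"
  proof (induction "wt m" arbitrary: m rule: less_induct)
    case less
    show ?case
    proof (cases "standard m")
      case False
      then consider "0 < lookup m z" | l s t k where "(l, s, t) \<in> set quadrics" "m = k + l"
        unfolding standard_def by auto
      then show ?thesis
      proof cases
        case 1
        with f g show ?thesis by (simp add: solution_def)
      next
        case (2 l s t k)
        have reduce: "h m = h (k + s) - h (k + t)" if "solution h" for h
          using that 2 unfolding solution_def by (fastforce simp: algebra_simps)
        have "wt (k + s) < wt m" "wt (k + t) < wt m"
          using quadrics_wt[OF 2(1)] 2(2) by (simp_all add: wt_add)
        then show ?thesis
          using reduce[OF f] reduce[OF g] less by simp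
      qed
    qed (rule std)
  qed
qed

text \<open>The substitution homomorphism, written out on monomials; its values on the variables are
  listed in \<open>psi_mvar\<close>.\<close>

definition psi_mon :: "mon \<Rightarrow> mon" where
  "psi_mon m =
     single y (2 * lookup m y + lookup m a1 + lookup m b1 + lookup m b2 + lookup m d1 + lookup m d2)
     + single a1 (lookup m a1 + lookup m a2 + lookup m a3) + single b1 (lookup m b1)
     + single b2 (lookup m b2) + single d1 (lookup m d1 + lookup m a2)
     + single d2 (lookup m d2 + lookup m a3)"

definition psi_c :: poly10 where
  "psi_c = single (mvar b2 + mvar d1) 1 + single (mvar b1 + mvar d2) 1"

definition psi :: "mon \<Rightarrow> poly10" where
  "psi m = single (psi_mon m) ((-1) ^ lookup m a3 * 0 ^ lookup m z) * psi_c ^ lookup m c"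

lemma psi_add: "psi (m + n) = psi m * psi n"
proof -
  have "psi_mon (m + n) = psi_mon m + psi_mon n"
    by (simp add: psi_mon_def lookup_add single_add algebra_simps)
  then show ?thesis
    by (simp add: psi_def lookup_add power_add mult_single algebra_simps)
qed

lemma psi_mvar [simp]:
  "psi (mvar y) = single (mvar y + mvar y) 1"
  "psi (mvar z) = 0"
  "psi (mvar a1) = single (mvar y + mvar a1) 1"
  "psi (mvar a2) = single (mvar a1 + mvar d1) 1"
  "psi (mvar a3) = - single (mvar a1 + mvar d2) 1"
  "psi (mvar b1) = single (mvar y + mvar b1) 1"
  "psi (mvar b2) = single (mvar y + mvar b2) 1"
  "psi (mvar c) = psi_c"
  "psi (mvar d1) = single (mvar y + mvar d1) 1"
  "psi (mvar d2) = single (mvar y + mvar d2) 1"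
  by (simp_all add: psi_def psi_mon_def single_uminus[symmetric])
    (simp_all add: mvar_def single_add[symmetric] numeral_2_eq_2)

lemma psi_eq_0: "0 < lookup m z \<Longrightarrow> psi m = 0"
  by (simp add: psi_def zero_power)

lemma psi_quadrics: "(l, s, t) \<in> set quadrics \<Longrightarrow> psi (k + l) = psi (k + s) - psi (k + t)"
proof -
  assume "(l, s, t) \<in> set quadrics"
  then have "psi l - psi s + psi t = 0"
    by (auto simp: quadrics_def psi_add psi_c_def mult_single algebra_simps ac_simps)
  then have "psi k * (psi l - psi s + psi t) = 0"
    by simp
  then show ?thesis
    by (simp add: psi_add algebra_simps)
qed

lemma single_mult_psi_c_Suc:
  "single k \<kappa> * psi_c ^ Suc l =
     single (k + mvar b2 + mvar d1) \<kappa> * psi_c ^ l + single (k + mvar b1 + mvar d2) \<kappa> * psi_c ^ l"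
proof -
  have "single k \<kappa> * psi_c = single (k + mvar b2 + mvar d1) \<kappa> + single (k + mvar b1 + mvar d2) \<kappa>"
    by (simp add: psi_c_def distrib_left mult_single add.assoc)
  then show ?thesis
    by (simp add: mult.assoc[symmetric] distrib_right)
qed

lemma add_mvar_b1_d2_shift:
  "(k + mvar b1 + mvar d2) + single b1 l + single d2 l = k + single b1 (Suc l) + single d2 (Suc l)"
  by (rule poly_mapping_eqI) (simp add: lookup_add lookup_single when_def)

lemma lookup_single_mult_psi_c_power:
  "lookup (single k \<kappa> * psi_c ^ l) u \<noteq> 0 \<Longrightarrow>
     u = k + single b1 l + single d2 l \<or> lookup u b1 < lookup k b1 + l"
proof (induction l arbitrary: k)
  case 0
  then show ?case
    by (simp add: lookup_single when_def split: if_splits)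
next
  case (Suc l)
  have "lookup (single (k + mvar b2 + mvar d1) \<kappa> * psi_c ^ l) u
      + lookup (single (k + mvar b1 + mvar d2) \<kappa> * psi_c ^ l) u \<noteq> 0"
    using Suc.prems unfolding single_mult_psi_c_Suc lookup_add .
  then consider
      "lookup (single (k + mvar b2 + mvar d1) \<kappa> * psi_c ^ l) u \<noteq> 0"
    | "lookup (single (k + mvar b1 + mvar d2) \<kappa> * psi_c ^ l) u \<noteq> 0"
    by fastforce
  then show ?case
  proof cases
    case 1
    from Suc.IH[OF this] show ?thesis
      by (auto simp: lookup_add lookup_single)
  next
    case 2
    from Suc.IH[OF this] show ?thesis
      by (auto simp: add_mvar_b1_d2_shift lookup_add)
  qed
qed

lemma lookup_single_mult_psi_c_power_lead:
  "lookup (single k \<kappa> * psi_c ^ l) (k + single b1 l + single d2 l) = \<kappa>"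
proof (induction l arbitrary: k)
  case (Suc l)
  let ?target = "k + single b1 (Suc l) + single d2 (Suc l)"
  have other: "lookup (single (k + mvar b2 + mvar d1) \<kappa> * psi_c ^ l) ?target = 0"
  proof (rule ccontr)
    assume "lookup (single (k + mvar b2 + mvar d1) \<kappa> * psi_c ^ l) ?target \<noteq> 0"
    from lookup_single_mult_psi_c_power[OF this] show False
      by (auto simp: lookup_add lookup_single dest: arg_cong[where f = "\<lambda>m. lookup m b2"])
  qed
  have "lookup (single (k + mvar b1 + mvar d2) \<kappa> * psi_c ^ l) ?target = \<kappa>"
    using Suc.IH[of "k + mvar b1 + mvar d2"] unfolding add_mvar_b1_d2_shift .
  with other show ?case
    unfolding single_mult_psi_c_Suc lookup_add by simp
qed simp

definition lead :: "mon \<Rightarrow> mon" where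
  "lead w = psi_mon w + single b1 (lookup w c) + single d2 (lookup w c)"

lemma psi_lead: "lookup w z = 0 \<Longrightarrow> lookup (psi w) (lead w) = (-1) ^ lookup w a3"
  by (simp add: psi_def lead_def lookup_single_mult_psi_c_power_lead)

lemma psi_other: "lookup (psi w) u \<noteq> 0 \<Longrightarrow> u = lead w \<or> lookup u b1 < lookup (lead w) b1"
  unfolding psi_def lead_def
  by (drule lookup_single_mult_psi_c_power) (simp add: lookup_add lookup_single when_def)

lemma standard_exponents:
  assumes "standard w"
  defines "L \<equiv> lookup (lead w)"
  shows "lookup w d2 = L d2 - L a1 - L b1"
    and "lookup w a3 = L d2 - lookup w d2 - L b1"
    and "lookup w c = L d2 - lookup w d2 - lookup w a3"
    and "lookup w b1 = L b1 - lookup w c"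
    and "lookup w a2 = min (L a1 - lookup w a3) (L d1)"
    and "lookup w a1 = L a1 - lookup w a3 - lookup w a2"
    and "lookup w d1 = L d1 - lookup w a2"
    and "lookup w b2 = L b2"
    and "lookup w y = (L y - lookup w a1 - lookup w b1 - lookup w b2 - lookup w d1 - lookup w d2) div 2"
    and "lookup w z = 0"
  using assms unfolding standard_iff L_def lead_def psi_mon_def
  by (auto simp: lookup_add lookup_single)

lemma lead_inj:
  assumes "standard w" and "standard w'" and "lead w = lead w'"
  shows "w = w'"
proof (rule poly_mapping_eqI)
  fix v
  have "v \<in> {y, z, a1, a2, a3, b1, b2, c, d1, d2}"
    using UNIV_eq_vars by blast
  then show "lookup w v = lookup w' v"
    by (elim insertE emptyE)
      (simp_all only: standard_exponents[OF assms(1)] standard_exponents[OF assms(2)] assms(3))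
qed

text \<open>Among the standard monomials in the support of \<open>cc\<close>, one whose leading monomial has the
  largest \<open>b1\<close>-exponent is the only one whose image involves that leading monomial.\<close>

lemma psi_standard_independent:
  assumes std: "keys cc \<subseteq> Collect standard"
    and zero: "\<And>u. lin (\<lambda>w. lookup (psi w) u) cc = 0"
  shows "cc = 0"
proof (rule ccontr)
  assume "cc \<noteq> 0"
  let ?K = "keys cc" and ?h = "\<lambda>w. lookup (lead w) b1"
  have fin: "finite ?K" and ne: "?K \<noteq> {}"
    using \<open>cc \<noteq> 0\<close> by auto
  have "Max (?h ` ?K) \<in> ?h ` ?K"
    using fin ne by (intro Max_in) auto
  then obtain w0 where w0: "w0 \<in> ?K" "?h w0 = Max (?h ` ?K)"
    by (metis (no_types, lifting) imageE)
  have others: "lookup (psi w) (lead w0) = 0" if "w \<in> ?K - {w0}" for w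
  proof (rule ccontr)
    assume "lookup (psi w) (lead w0) \<noteq> 0"
    then have "lead w0 = lead w \<or> ?h w0 < ?h w"
      by (rule psi_other)
    moreover have "?h w \<le> ?h w0"
      using w0(2) fin that by simp
    ultimately have "lead w0 = lead w"
      by simp
    then show False
      using lead_inj[of w0 w] std w0(1) that by auto
  qed
  have "lin (\<lambda>w. lookup (psi w) (lead w0)) cc
      = lookup cc w0 * lookup (psi w0) (lead w0)
        + (\<Sum>w\<in>?K - {w0}. lookup cc w * lookup (psi w) (lead w0))"
    unfolding lin_def using fin w0(1) by (simp add: sum.remove)
  also have "\<dots> = lookup cc w0 * (-1) ^ lookup w0 a3"
    using others std w0(1) by (auto simp: psi_lead standard_def)
  finally have "lookup cc w0 = 0"
    using zero by simp
  then show False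
    using w0(1) by (simp add: in_keys_iff)
qed

text \<open>\<open>cc\<close>, read as a linear combination of standard monomials of the degree of \<open>m\<close>,
  has the same image under \<open>psi\<close> as \<open>m\<close>.\<close>

definition expansion :: "mon \<Rightarrow> poly10 \<Rightarrow> bool" where
  "expansion m cc \<longleftrightarrow> keys cc \<subseteq> {w. standard w \<and> deg w = deg m} \<and>
     (\<forall>u. lin (\<lambda>w. lookup (psi w) u) cc = lookup (psi m) u)"

lemma expansion_unique: "expansion m cc \<Longrightarrow> expansion m cc' \<Longrightarrow> cc = cc'"
proof -
  assume "expansion m cc" "expansion m cc'"
  then have "cc - cc' = 0"
    using keys_diff[of cc cc']
    by (intro psi_standard_independent) (auto simp: expansion_def lin_diff)
  then show "cc = cc'"
    by simp
qed

lemma expansion_diff: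
  assumes "expansion m1 cc1" and "expansion m2 cc2"
    and "psi m = psi m1 - psi m2" and "deg m1 = deg m" and "deg m2 = deg m"
  shows "expansion m (cc1 - cc2)"
  using assms keys_diff[of cc1 cc2] by (auto simp: expansion_def lin_diff lookup_minus)

lemma expansion_standard: "standard w \<Longrightarrow> expansion w (single w 1)"
  by (simp add: expansion_def)

lemma expansion_eq_0: "0 < lookup m z \<Longrightarrow> expansion m 0"
  by (simp add: expansion_def psi_eq_0)

lemma expansion_exists: "\<exists>cc. expansion m cc"
proof (induction "wt m" arbitrary: m rule: less_induct)
  case less
  show ?case
  proof (cases "standard m")
    case False
    then consider "0 < lookup m z" | l s t k where "(l, s, t) \<in> set quadrics" "m = k + l"
      unfolding standard_def by auto
    then show ?thesis
    proof cases
      case 1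
      then show ?thesis
        using expansion_eq_0 by blast
    next
      case (2 l s t k)
      have "wt (k + s) < wt m" "wt (k + t) < wt m"
        using quadrics_wt[OF 2(1)] 2(2) by (simp_all add: wt_add)
      then obtain cc1 cc2 where cc1: "expansion (k + s) cc1" and cc2: "expansion (k + t) cc2"
        using less by blast
      have "expansion (k + l) (cc1 - cc2)"
        using quadrics_deg[OF 2(1)]
        by (intro expansion_diff[OF cc1 cc2 psi_quadrics[OF 2(1)]]) (simp_all add: deg_add)
      then show ?thesis
        using 2(2) by blast
    qed
  qed (use expansion_standard in blast)
qed

definition coord :: "mon \<Rightarrow> poly10" where
  "coord m = (THE cc. expansion m cc)"

lemma coord_eqI: "expansion m cc \<Longrightarrow> coord m = cc"
  unfolding coord_def using expansion_unique by blast

lemma expansion_coord: "expansion m (coord m)"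
  using expansion_exists coord_eqI by blast

definition extend :: "(mon \<Rightarrow> complex) \<Rightarrow> mon \<Rightarrow> complex" where
  "extend \<phi> m = lin \<phi> (coord m)"

lemma solution_extend: "solution (extend \<phi>)"
proof -
  have "extend \<phi> m = 0" if "0 < lookup m z" for m
    using coord_eqI[OF expansion_eq_0[OF that]] by (simp add: extend_def)
  moreover have "extend \<phi> (k + l) - extend \<phi> (k + s) + extend \<phi> (k + t) = 0"
    if q: "(l, s, t) \<in> set quadrics" for l s t k
  proof -
    have "deg (k + s) = deg (k + l)" "deg (k + t) = deg (k + l)"
      using quadrics_deg[OF q] by (simp_all add: deg_add)
    then have "coord (k + l) = coord (k + s) - coord (k + t)"
      by (intro coord_eqI expansion_diff[OF expansion_coord expansion_coord psi_quadrics[OF q]])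
    then show ?thesis
      by (simp add: extend_def lin_diff)
  qed
  ultimately show ?thesis
    unfolding solution_def by auto
qed

lemma extend_standard: "standard w \<Longrightarrow> extend \<phi> w = \<phi> w"
  using coord_eqI[OF expansion_standard] by (simp add: extend_def)

lemma extend_eq_0:
  assumes "\<And>w. standard w \<Longrightarrow> deg w = deg m \<Longrightarrow> \<phi> w = 0"
  shows "extend \<phi> m = 0"
proof -
  have "keys (coord m) \<subseteq> {w. standard w \<and> deg w = deg m}"
    using expansion_coord by (simp add: expansion_def)
  then have "\<phi> w = 0" if "w \<in> keys (coord m)" for w
    using assms that by blast
  then show ?thesis
    by (simp add: extend_def lin_def)
qed

lemma finite_extend:
  assumes "finite {w. \<phi> w \<noteq> 0}"
  shows "finite {m. extend \<phi> m \<noteq> 0}"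
proof -
  define D where "D = Max (deg ` {w. \<phi> w \<noteq> 0})"
  have "deg w \<le> D" if "\<phi> w \<noteq> 0" for w
    unfolding D_def using assms that by (intro Max_ge) auto
  then have "extend \<phi> m = 0" if "D < deg m" for m
    using that by (intro extend_eq_0) fastforce
  then have "{m. extend \<phi> m \<noteq> 0} \<subseteq> {m. deg m \<le> D}"
    by (auto simp: not_less[symmetric])
  then show ?thesis
    using finite_deg_le finite_subset by blast
qed

lemma solution_primitive:
  assumes f: "solution f" and fin: "finite {m. f m \<noteq> 0}"
  shows "\<exists>g. solution g \<and> finite {m. g m \<noteq> 0} \<and> (\<forall>m. g (m + mvar y) = f m)"
proof -
  define \<phi> where "\<phi> w = (if 0 < lookup w y then f (w - mvar y) else 0)" for w
  define g where "g = extend \<phi>"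
  have "(\<lambda>m. g (m + mvar y)) = f"
  proof (rule solution_eqI)
    show "solution (\<lambda>m. g (m + mvar y))"
      unfolding g_def by (rule solution_shift[OF solution_extend]) simp
    show "g (w + mvar y) = f w" if "standard w" for w
      using that by (simp add: g_def \<phi>_def extend_standard standard_add_mvar_y lookup_add)
  qed (fact f)
  moreover have "finite {m. g m \<noteq> 0}"
  proof -
    have "{w. \<phi> w \<noteq> 0} \<subseteq> (\<lambda>m. m + mvar y) ` {m. f m \<noteq> 0}"
    proof
      fix w
      assume "w \<in> {w. \<phi> w \<noteq> 0}"
      then have "0 < lookup w y" and "f (w - mvar y) \<noteq> 0"
        by (auto simp: \<phi>_def split: if_splits)
      then show "w \<in> (\<lambda>m. m + mvar y) ` {m. f m \<noteq> 0}"
        using diff_add_mvar by (intro image_eqI[of _ _ "w - mvar y"]) auto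
    qed
    then show ?thesis
      unfolding g_def using fin by (intro finite_extend) (auto intro: finite_subset)
  qed
  ultimately show ?thesis
    using solution_extend g_def by blast
qed

lemma solution_flip_sign_iff:
  "solution (\<lambda>m. flip_sign N m * T m) \<longleftrightarrow> (\<forall>m. 0 < lookup m z \<longrightarrow> T m = 0) \<and>
     (\<forall>(l, s, t) \<in> set quadrics. \<forall>m.
        flip_sign N l * T (m + l) - flip_sign N s * T (m + s) + flip_sign N t * T (m + t) = 0)"
proof -
  have "flip_sign N (m + l) * T (m + l) - flip_sign N (m + s) * T (m + s) + flip_sign N (m + t) * T (m + t)
      = flip_sign N m * (flip_sign N l * T (m + l) - flip_sign N s * T (m + s) + flip_sign N t * T (m + t))"
    for m l s t
    by (simp add: flip_sign_add algebra_simps)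
  then show ?thesis
    by (simp add: solution_def)
qed

lemma harmonic_primitive:
  assumes "y \<notin> N"
    and harmonic_iff: "\<And>P. indep_of z P \<and> harmonic P \<longleftrightarrow> solution (\<lambda>m. flip_sign N m * taylor P m)"
    and "indep_of z P" and "harmonic P"
  shows "\<exists>Q. indep_of z Q \<and> pd y Q = P \<and> harmonic Q"
proof -
  define f where "f m = flip_sign N m * taylor P m" for m
  have "solution f"
    using assms harmonic_iff unfolding f_def by blast
  moreover have "finite {m. f m \<noteq> 0}"
    by (rule finite_subset[of _ "keys P"]) (auto simp: f_def taylor_def in_keys_iff)
  ultimately obtain g where g: "solution g" "finite {m. g m \<noteq> 0}" "\<And>m. g (m + mvar y) = f m"
    using solution_primitive by blast
  have "finite {m. flip_sign N m * g m \<noteq> 0}"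
    using g(2) by simp
  then obtain Q where Q: "\<And>m. taylor Q m = flip_sign N m * g m"
    using taylor_surj[of "\<lambda>m. flip_sign N m * g m"] by blast
  have "(\<lambda>m. flip_sign N m * taylor Q m) = g"
    by (simp add: Q mult.assoc[symmetric] flip_sign_square)
  then have "indep_of z Q \<and> harmonic Q"
    using harmonic_iff g(1) by simp
  moreover have "pd y Q = P"
    unfolding poly_eq_iff_taylor
  proof
    fix m
    have "taylor (pd y Q) m = flip_sign N m * f m"
      using \<open>y \<notin> N\<close> by (simp add: taylor_pd Q g(3) flip_sign_add)
    also have "\<dots> = taylor P m"
      by (simp add: f_def mult.assoc[symmetric] flip_sign_square)
    finally show "taylor (pd y Q) m = taylor P m" .
  qed
  ultimately show ?thesis
    by blast
qed

end

text \<open>In each case the variables are assigned to the roles \<open>y, z, a1, a2, a3, b1, b2, c, d1, d2\<close>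
  so that, after the sign change of the variables in \<open>N\<close>, the operators \<open>D, D\<^sub>1, \<dots>, D\<^sub>4\<close> become
  the five quadric operators up to sign.\<close>

lemma harmonic_primitive_X14_X24:
  assumes "indep_of X14 P" and "harmonic P"
  shows "\<exists>Q. indep_of X14 Q \<and> pd X24 Q = P \<and> harmonic Q"
proof -
  interpret five_quadrics X24 X14 X12 X13 X1 X23 X2 X3 X34 X4
    by unfold_locales simp
  show ?thesis
  proof (rule harmonic_primitive[where N = "{}"])
    show "indep_of X14 P' \<and> harmonic P' \<longleftrightarrow> solution (\<lambda>m. flip_sign {} m * taylor P' m)" for P'
      unfolding solution_flip_sign_iff
      by (auto simp: indep_of_iff_taylor harmonic_iff_taylor quadrics_def flip_sign_add algebra_simps)
  qed (use assms in simp_all)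
qed

lemma harmonic_primitive_X14_X34:
  assumes "indep_of X14 P" and "harmonic P"
  shows "\<exists>Q. indep_of X14 Q \<and> pd X34 Q = P \<and> harmonic Q"
proof -
  interpret five_quadrics X34 X14 X13 X12 X1 X23 X3 X2 X24 X4
    by unfold_locales simp
  show ?thesis
  proof (rule harmonic_primitive[where N = "{X23}"])
    show "indep_of X14 P' \<and> harmonic P' \<longleftrightarrow> solution (\<lambda>m. flip_sign {X23} m * taylor P' m)" for P'
      unfolding solution_flip_sign_iff
      by (auto simp: indep_of_iff_taylor harmonic_iff_taylor quadrics_def flip_sign_add algebra_simps)
  qed (use assms in simp_all)
qed

lemma harmonic_primitive_X24_X14:
  assumes "indep_of X24 P" and "harmonic P"
  shows "\<exists>Q. indep_of X24 Q \<and> pd X14 Q = P \<and> harmonic Q"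
proof -
  interpret five_quadrics X14 X24 X12 X23 X2 X13 X1 X3 X34 X4
    by unfold_locales simp
  show ?thesis
  proof (rule harmonic_primitive[where N = "{X12}"])
    show "indep_of X24 P' \<and> harmonic P' \<longleftrightarrow> solution (\<lambda>m. flip_sign {X12} m * taylor P' m)" for P'
      unfolding solution_flip_sign_iff
      by (auto simp: indep_of_iff_taylor harmonic_iff_taylor quadrics_def flip_sign_add algebra_simps)
  qed (use assms in simp_all)
qed

lemma harmonic_primitive_X24_X34:
  assumes "indep_of X24 P" and "harmonic P"
  shows "\<exists>Q. indep_of X24 Q \<and> pd X34 Q = P \<and> harmonic Q"
proof -
  interpret five_quadrics X34 X24 X23 X12 X2 X13 X3 X1 X14 X4
    by unfold_locales simp
  show ?thesis
  proof (rule harmonic_primitive[where N = "{X12, X13}"])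
    show "indep_of X24 P' \<and> harmonic P' \<longleftrightarrow> solution (\<lambda>m. flip_sign {X12, X13} m * taylor P' m)" for P'
      unfolding solution_flip_sign_iff
      by (auto simp: indep_of_iff_taylor harmonic_iff_taylor quadrics_def flip_sign_add algebra_simps)
  qed (use assms in simp_all)
qed

lemma harmonic_primitive_X34_X14:
  assumes "indep_of X34 P" and "harmonic P"
  shows "\<exists>Q. indep_of X34 Q \<and> pd X14 Q = P \<and> harmonic Q"
proof -
  interpret five_quadrics X14 X34 X13 X23 X3 X12 X1 X2 X24 X4
    by unfold_locales simp
  show ?thesis
  proof (rule harmonic_primitive[where N = "{X13, X23}"])
    show "indep_of X34 P' \<and> harmonic P' \<longleftrightarrow> solution (\<lambda>m. flip_sign {X13, X23} m * taylor P' m)" for P'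
      unfolding solution_flip_sign_iff
      by (auto simp: indep_of_iff_taylor harmonic_iff_taylor quadrics_def flip_sign_add algebra_simps)
  qed (use assms in simp_all)
qed

lemma harmonic_primitive_X34_X24:
  assumes "indep_of X34 P" and "harmonic P"
  shows "\<exists>Q. indep_of X34 Q \<and> pd X24 Q = P \<and> harmonic Q"
proof -
  interpret five_quadrics X24 X34 X23 X13 X3 X12 X2 X1 X14 X4
    by unfold_locales simp
  show ?thesis
  proof (rule harmonic_primitive[where N = "{X12, X13, X23}"])
    show "indep_of X34 P' \<and> harmonic P' \<longleftrightarrow> solution (\<lambda>m. flip_sign {X12, X13, X23} m * taylor P' m)" for P'
      unfolding solution_flip_sign_iff
      by (auto simp: indep_of_iff_taylor harmonic_iff_taylor quadrics_def flip_sign_add algebra_simps)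
  qed (use assms in simp_all)
qed

theorem mainTheorem8:
  fixes a b :: nat and P :: poly10
  assumes "a \<in> {1, 2, 3}" and "b \<in> {1, 2, 3}" and "a \<noteq> b"
    and "indep_of (x_4 a) P"
    and "opD P = 0" and "opD1 P = 0" and "opD2 P = 0" and "opD3 P = 0" and "opD4 P = 0"
  shows "\<exists>Q :: poly10. indep_of (x_4 a) Q \<and> pd (x_4 b) Q = P
           \<and> opD Q = 0 \<and> opD1 Q = 0 \<and> opD2 Q = 0 \<and> opD3 Q = 0 \<and> opD4 Q = 0"
proof -
  have x_4: "x_4 1 = X14" "x_4 2 = X24" "x_4 3 = X34"
    by (simp_all add: numeral_2_eq_2 numeral_3_eq_3)
  have "harmonic P"
    using assms(5-9) by (simp add: harmonic_def)
  from assms(1-3) consider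
      "a = 1" "b = 2" | "a = 1" "b = 3" | "a = 2" "b = 1"
    | "a = 2" "b = 3" | "a = 3" "b = 1" | "a = 3" "b = 2"
    by auto
  then have "\<exists>Q. indep_of (x_4 a) Q \<and> pd (x_4 b) Q = P \<and> harmonic Q"
    using assms(4) \<open>harmonic P\<close>
    by cases (simp_all add: x_4 harmonic_primitive_X14_X24 harmonic_primitive_X14_X34
      harmonic_primitive_X24_X14 harmonic_primitive_X24_X34 harmonic_primitive_X34_X14
      harmonic_primitive_X34_X24)
  then show ?thesis
    by (simp add: harmonic_def)
qed

end
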